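(* Let $\Delta_n$ ($n\ge 0$) be as defined in the context. Then, as an identity of power series (convergent in a neighborhood of $t=0$), $$f(t):=\sum_{n\ge 0}\Delta_n (2t)^n=\frac12\,\frac{1}{\sqrt{(1-t)(1-2t)(2t^2+t+1)}}-\frac12\,\frac{1}{1-t},$$ where the square root is the branch equal to $1$ at $t=0$.
   Context: A fair coin is flipped $n$ times, producing a sequence $x_1,\dots,x_n\in\{H,T\}$ of independent uniformly random outcomes. Alice's score is the number of indices $i\in\{1,\dots,n-1\}$ with $(x_i,x_{i+1})=(H,H)$; Bob's score is the number of indices $i\in\{1,\dots,n-1\}$ with $(x_i,x_{i+1})=(H,T)$. Let $P_n(\mathrm{Bob})$ be the probability that Bob's score is strictly larger than Alice's, $P_n(\mathrm{Alice})$ the probability that Alice's score is strictly larger than Bob's, and $\Delta_n=P_n(\mathrm{Bob})-P_n(\mathrm{Alice})$ (so $\Delta_0=0$). *)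

theory Defs
  imports Complex_Main
begin

text \<open>Coin sequences are boolean lists; True = H, False = T. Positions are 0-based,
  so index i (0-based) with i+1 < length xs corresponds to the paper's index i+1 in {1..n-1}.\<close>

definition alice_score :: "bool list \<Rightarrow> nat" where
  "alice_score xs = card {i. i + 1 < length xs \<and> xs ! i \<and> xs ! (i+1)}"

definition bob_score :: "bool list \<Rightarrow> nat" where
  "bob_score xs = card {i. i + 1 < length xs \<and> xs ! i \<and> \<not> xs ! (i+1)}"

definition P_bob :: "nat \<Rightarrow> real" where
  "P_bob n = real (card {xs :: bool list. length xs = n \<and> alice_score xs < bob_score xs}) / 2 ^ n"

definition P_alice :: "nat \<Rightarrow> real" where
  "P_alice n = real (card {xs :: bool list. length xs = n \<and> bob_score xs < alice_score xs}) / 2 ^ n"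

definition Delta :: "nat \<Rightarrow> real" where
  "Delta n = P_bob n - P_alice n"

end

theory Submission
  imports Defs "HOL-Analysis.FPS_Convergence"
begin

text \<open>
  Let \<open>H\<^sub>k\<close> and \<open>T\<^sub>k\<close> be the generating functions (in \<open>x\<close>, marking length) of the coin
  sequences that start with H, resp. T, and whose score difference Bob \<open>-\<close> Alice is \<open>k\<close>.
  Prepending a coin gives the linear recurrences
  \<open>H\<^sub>k = x ([k = 0] + T\<^sub>k\<^sub>-\<^sub>1 + H\<^sub>k\<^sub>+\<^sub>1)\<close> and \<open>T\<^sub>k = x ([k = 0] + T\<^sub>k + H\<^sub>k)\<close>,
  which determine all coefficients. They are solved by sequences that are geometric in \<open>k\<close>
  on either side of \<open>0\<close>: if \<open>u\<close> is the power series root of \<open>u = x/(1-x) + x\<^sup>2 u\<^sup>2\<close>, the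
  ratios are \<open>x u\<close> for \<open>k > 0\<close> and \<open>(1-x) u\<close> for \<open>k < 0\<close>. Summing \<open>sgn k (H\<^sub>k + T\<^sub>k)\<close> over \<open>k\<close>
  gives a series \<open>G\<close> with coefficients \<open>2\<^sup>n \<Delta>\<^sub>n\<close>, and an algebraic computation shows
  \<open>(2 G + 1/(1-x))\<^sup>2 (1-x)(1-2x)(2x\<^sup>2+x+1) = 1\<close>. Since \<open>|2\<^sup>n \<Delta>\<^sub>n| \<le> 2\<^sup>n\<close>, everything converges
  for \<open>|t| < 1/2\<close>, and there \<open>2 G(t) + 1/(1-t)\<close> is the positive square root, being \<open>1\<close> at
  \<open>t = 0\<close> and never \<open>0\<close>.
\<close>

section \<open>Counting sequences by first coin and score difference\<close>

definition adjacent_count :: "(bool \<Rightarrow> bool \<Rightarrow> bool) \<Rightarrow> bool list \<Rightarrow> nat" where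
  "adjacent_count P xs = card {i. i + 1 < length xs \<and> P (xs ! i) (xs ! (i+1))}"

lemma adjacent_count_Nil [simp]: "adjacent_count P [] = 0"
  and adjacent_count_singleton [simp]: "adjacent_count P [x] = 0"
  by (simp_all add: adjacent_count_def)

lemma adjacent_count_Cons_Cons:
  "adjacent_count P (x # y # xs) = (if P x y then 1 else 0) + adjacent_count P (y # xs)"
proof -
  let ?A = "{i. i + 1 < length (y # xs) \<and> P ((y # xs) ! i) ((y # xs) ! (i+1))}"
  have "{i. i + 1 < length (x # y # xs) \<and> P ((x # y # xs) ! i) ((x # y # xs) ! (i+1))}
      = {i. i = 0 \<and> P x y} \<union> Suc ` ?A" (is "?B = _")
  proof (rule set_eqI)
    show "i \<in> ?B \<longleftrightarrow> i \<in> {i. i = 0 \<and> P x y} \<union> Suc ` ?A" for i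
      by (cases i) auto
  qed
  moreover have "finite ?A"
    by (rule finite_subset[of _ "{..<length (y # xs)}"]) auto
  ultimately show ?thesis
    by (simp add: adjacent_count_def card_Un_disjoint card_image)
qed

definition score :: "bool list \<Rightarrow> int" where
  "score xs = int (bob_score xs) - int (alice_score xs)"

lemma score_eq_adjacent_count:
  "score xs = int (adjacent_count (\<lambda>a b. a \<and> \<not> b) xs) - int (adjacent_count (\<lambda>a b. a \<and> b) xs)"
  by (simp add: score_def adjacent_count_def bob_score_def alice_score_def)

lemma score_Nil [simp]: "score [] = 0"
  and score_singleton [simp]: "score [x] = 0"
  and score_Cons_Cons [simp]: "score (x # y # xs) = score (y # xs) + (if x then (if y then -1 else 1) else 0)"
  by (simp_all add: score_eq_adjacent_count adjacent_count_Cons_Cons)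

lemma score_Cons: "score (x # ys) = score ys + (if x \<and> ys \<noteq> [] then (if hd ys then -1 else 1) else 0)"
  by (cases ys) auto

lemma abs_score_le_length: "\<bar>score xs\<bar> \<le> int (length xs)"
  by (induction xs rule: induct_list012) auto

definition bool_lists :: "nat \<Rightarrow> bool list set" where
  "bool_lists n = {xs. length xs = n}"

lemma finite_bool_lists [simp]: "finite (bool_lists n)"
  using finite_lists_length_eq[of "UNIV :: bool set" n] by (simp add: bool_lists_def)

lemma card_bool_lists: "card (bool_lists n) = 2 ^ n"
  using card_lists_length_eq[of "UNIV :: bool set" n] by (simp add: bool_lists_def)

lemma bool_lists_0: "bool_lists 0 = {[]}"
  by (auto simp: bool_lists_def)

lemma sum_bool_lists_Suc:
  "(\<Sum>xs\<in>bool_lists (Suc n). f xs) = (\<Sum>ys\<in>bool_lists n. f (True # ys)) + (\<Sum>ys\<in>bool_lists n. f (False # ys))"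
proof -
  have "bool_lists (Suc n) = (\<lambda>(b, ys). b # ys) ` (UNIV \<times> bool_lists n)"
    by (auto simp: bool_lists_def length_Suc_conv image_iff)
  moreover have "inj_on (\<lambda>(b, ys). b # ys) (UNIV \<times> bool_lists n)"
    by (auto simp: inj_on_def)
  ultimately have "(\<Sum>xs\<in>bool_lists (Suc n). f xs) = (\<Sum>b\<in>UNIV. \<Sum>ys\<in>bool_lists n. f (b # ys))"
    by (simp add: sum.reindex sum.cartesian_product split_def)
  then show ?thesis
    by (simp add: UNIV_bool add.commute)
qed

lemma sum_bool_lists_Nil_indicator:
  "(\<Sum>ys\<in>bool_lists n. if ys = [] \<and> P then 1 else 0) = (if n = 0 \<and> P then 1 else (0::real))"
  by (cases n) (auto simp: bool_lists_def intro!: sum.neutral)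

definition head_score_count :: "bool \<Rightarrow> nat \<Rightarrow> int \<Rightarrow> real" where
  "head_score_count b n k = (\<Sum>xs\<in>bool_lists n. if xs \<noteq> [] \<and> hd xs = b \<and> score xs = k then 1 else 0)"

lemma head_score_count_0: "head_score_count b 0 k = 0"
  by (simp add: head_score_count_def bool_lists_0)

lemma head_score_count_Suc_False:
  "head_score_count False (Suc n) k =
     (if n = 0 \<and> k = 0 then 1 else 0) + head_score_count False n k + head_score_count True n k"
proof -
  have "head_score_count False (Suc n) k = (\<Sum>ys\<in>bool_lists n. if score ys = k then 1 else 0)"
    unfolding head_score_count_def sum_bool_lists_Suc by (simp add: score_Cons)
  also have "\<dots> = (\<Sum>ys\<in>bool_lists n. (if ys = [] \<and> k = 0 then 1 else 0)
      + (if ys \<noteq> [] \<and> hd ys = False \<and> score ys = k then 1 else 0)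
      + (if ys \<noteq> [] \<and> hd ys = True \<and> score ys = k then 1 else 0))"
    by (rule sum.cong) auto
  finally show ?thesis
    by (simp add: sum.distrib head_score_count_def sum_bool_lists_Nil_indicator)
qed

lemma head_score_count_Suc_True:
  "head_score_count True (Suc n) k =
     (if n = 0 \<and> k = 0 then 1 else 0) + head_score_count False n (k - 1) + head_score_count True n (k + 1)"
proof -
  have "head_score_count True (Suc n) k = (\<Sum>ys\<in>bool_lists n. if score (True # ys) = k then 1 else 0)"
    unfolding head_score_count_def sum_bool_lists_Suc by simp
  also have "\<dots> = (\<Sum>ys\<in>bool_lists n. (if ys = [] \<and> k = 0 then 1 else 0)
      + (if ys \<noteq> [] \<and> hd ys = False \<and> score ys = k - 1 then 1 else 0)
      + (if ys \<noteq> [] \<and> hd ys = True \<and> score ys = k + 1 then 1 else 0))"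
    by (rule sum.cong) (auto simp: score_Cons)
  finally show ?thesis
    by (simp add: sum.distrib head_score_count_def sum_bool_lists_Nil_indicator)
qed

definition signed_count :: "nat \<Rightarrow> real" where
  "signed_count n = (\<Sum>xs\<in>bool_lists n. of_int (sgn (score xs)))"

lemma Delta_eq_signed_count: "Delta n * 2 ^ n = signed_count n"
proof -
  have card_eq: "real (card {xs. length xs = n \<and> P xs}) = (\<Sum>xs\<in>bool_lists n. if P xs then 1 else 0)" for P
  proof -
    have "{xs. length xs = n \<and> P xs} = {xs \<in> bool_lists n. P xs}"
      by (auto simp: bool_lists_def)
    then show ?thesis
      by (simp add: sum.inter_filter[symmetric])
  qed
  have "Delta n * 2 ^ n = (\<Sum>xs\<in>bool_lists n. if alice_score xs < bob_score xs then 1 else 0)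
      - (\<Sum>xs\<in>bool_lists n. if bob_score xs < alice_score xs then 1 else 0)"
    by (simp add: Delta_def P_bob_def P_alice_def card_eq[symmetric] field_simps)
  also have "\<dots> = signed_count n"
    unfolding signed_count_def sum_subtractf[symmetric]
    by (rule sum.cong) (auto simp: score_def sgn_if)
  finally show ?thesis .
qed

lemma abs_signed_count_le: "\<bar>signed_count n\<bar> \<le> 2 ^ n"
proof -
  have "\<bar>signed_count n\<bar> \<le> (\<Sum>xs\<in>bool_lists n. \<bar>of_int (sgn (score xs))\<bar>)"
    unfolding signed_count_def by (rule sum_abs)
  also have "\<dots> \<le> of_nat (card (bool_lists n)) * 1"
    by (rule sum_bounded_above) (auto simp: sgn_if)
  finally show ?thesis
    by (simp add: card_bool_lists)
qed

lemma signed_count_0: "signed_count 0 = 0"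
  by (simp add: signed_count_def bool_lists_0)

lemma signed_count_eq_sum_head_score_count:
  "signed_count n = (\<Sum>k\<in>{-int n..int n}. of_int (sgn k) * (head_score_count False n k + head_score_count True n k))"
proof -
  have "of_int (sgn (score xs)) = (\<Sum>k\<in>{-int n..int n}. of_int (sgn k) *
          ((if xs \<noteq> [] \<and> hd xs = False \<and> score xs = k then 1 else 0)
         + (if xs \<noteq> [] \<and> hd xs = True \<and> score xs = k then 1 else (0::real))))"
    if "xs \<in> bool_lists n" for xs
  proof -
    have "score xs \<in> {-int n..int n}"
      using that abs_score_le_length[of xs] by (auto simp: bool_lists_def)
    then have "of_int (sgn (score xs)) = (\<Sum>k\<in>{-int n..int n}. if k = score xs then of_int (sgn k) else (0::real))"
      by simp
    also have "\<dots> = (\<Sum>k\<in>{-int n..int n}. of_int (sgn k) *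
          ((if xs \<noteq> [] \<and> hd xs = False \<and> score xs = k then 1 else 0)
         + (if xs \<noteq> [] \<and> hd xs = True \<and> score xs = k then 1 else 0)))"
      by (rule sum.cong) (cases xs, auto)
    finally show ?thesis .
  qed
  then show ?thesis
    unfolding signed_count_def head_score_count_def
    by (simp add: sum.swap[of _ "{-int n..int n}"] sum_distrib_left sum.distrib distrib_left)
qed

section \<open>Generating functions\<close>

definition geometric_fps :: "real fps" where
  "geometric_fps = Abs_fps (\<lambda>_. 1)"

lemma geometric_fps_mult_one_minus_X: "geometric_fps * (1 - fps_X) = 1"
  unfolding geometric_fps_def fps_inverse_gp'[symmetric] by (rule inverse_mult_eq_1') simp

definition disc :: "real fps" where
  "disc = 1 - 4 * fps_X ^ 3 * geometric_fps"

definition sqrt_disc :: "real fps" where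
  "sqrt_disc = fps_radical (\<lambda>_ _. 1) 2 disc"

lemma sqrt_disc_squared: "sqrt_disc ^ 2 = disc"
  using power_radical[of disc "\<lambda>_ _. 1" 1]
  by (simp add: sqrt_disc_def disc_def fps_mult_nth eval_nat_numeral)

lemma sqrt_disc_nth_0: "fps_nth sqrt_disc 0 = 1"
  by (simp add: sqrt_disc_def)

lemma sqrt_disc_nth_1: "fps_nth sqrt_disc 1 = 0"
proof -
  have "fps_nth (sqrt_disc * sqrt_disc) 1 = 2 * fps_nth sqrt_disc 1"
    by (simp add: fps_mult_nth sqrt_disc_nth_0)
  moreover have "fps_nth (sqrt_disc * sqrt_disc) 1 = 0"
    using sqrt_disc_squared by (simp add: power2_eq_square disc_def fps_mult_nth)
  ultimately show ?thesis
    by linarith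
qed

text \<open>The quadratic formula \<open>(1 - sqrt disc) / (2 x\<^sup>2)\<close>, with the sign chosen so that the
  division by \<open>x\<^sup>2\<close> is exact.\<close>

definition quad_root :: "real fps" where
  "quad_root = fps_const (1/2) * fps_shift 2 (1 - sqrt_disc)"

lemma sqrt_disc_eq_quad_root: "sqrt_disc = 1 - 2 * fps_X ^ 2 * quad_root"
proof -
  have "1 - sqrt_disc = fps_X ^ 2 * fps_shift 2 (1 - sqrt_disc)"
  proof (rule fps_ext)
    show "fps_nth (1 - sqrt_disc) m = fps_nth (fps_X ^ 2 * fps_shift 2 (1 - sqrt_disc)) m" for m
      using sqrt_disc_nth_0 sqrt_disc_nth_1
      by (cases m; cases "m - 1") (auto simp: fps_X_power_mult_nth)
  qed
  moreover have "2 * quad_root = fps_shift 2 (1 - sqrt_disc)"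
    by (simp add: quad_root_def numeral_fps_const mult.assoc[symmetric] fps_const_mult[symmetric])
  ultimately show ?thesis
    by algebra
qed

lemma quad_root_eq: "quad_root = fps_X * geometric_fps + fps_X ^ 2 * quad_root ^ 2"
proof -
  have "(1 - 2 * fps_X ^ 2 * quad_root) ^ 2 = 1 - 4 * fps_X ^ 3 * geometric_fps"
    using sqrt_disc_squared by (simp add: sqrt_disc_eq_quad_root disc_def)
  then have "fps_X ^ 2 * (4 * (quad_root - fps_X * geometric_fps - fps_X ^ 2 * quad_root ^ 2)) = 0"
    by (simp add: algebra_simps power2_eq_square power3_eq_cube)
  then have "quad_root - fps_X * geometric_fps = fps_X ^ 2 * quad_root ^ 2"
    by (simp add: numeral_fps_const)
  then show ?thesis
    by algebra
qed

lemma quad_root_nth_0: "fps_nth quad_root 0 = 0"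
  by (subst quad_root_eq) (simp add: fps_X_power_mult_nth)

lemma sqrt_disc_inverse: "inverse sqrt_disc * sqrt_disc = 1"
  by (rule inverse_mult_eq_1) (simp add: sqrt_disc_nth_0)

definition pos_ratio :: "real fps" where
  "pos_ratio = fps_X * quad_root"

definition neg_ratio :: "real fps" where
  "neg_ratio = (1 - fps_X) * quad_root"

definition zero_score_gf :: "real fps" where
  "zero_score_gf = fps_X * (1 + fps_X * quad_root) * inverse sqrt_disc"

lemma pos_ratio_eq: "pos_ratio = fps_X ^ 2 * geometric_fps + fps_X * pos_ratio ^ 2"
  using quad_root_eq unfolding pos_ratio_def by algebra

lemma neg_ratio_eq: "neg_ratio = fps_X + fps_X ^ 2 * geometric_fps * neg_ratio ^ 2"
  using quad_root_eq geometric_fps_mult_one_minus_X unfolding neg_ratio_def by algebra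

lemma zero_score_gf_eq:
  "zero_score_gf = fps_X * (1 + fps_X * (zero_score_gf * neg_ratio) * geometric_fps + (1 + zero_score_gf) * pos_ratio)"
proof -
  have "zero_score_gf * (1 - 2 * fps_X ^ 2 * quad_root) = fps_X * (1 + fps_X * quad_root)"
    using sqrt_disc_inverse unfolding zero_score_gf_def sqrt_disc_eq_quad_root by algebra
  then show ?thesis
    using geometric_fps_mult_one_minus_X unfolding pos_ratio_def neg_ratio_def by algebra
qed

lemma pos_ratio_nth_0: "fps_nth pos_ratio 0 = 0"
  by (simp add: pos_ratio_def)

lemma neg_ratio_nth_0: "fps_nth neg_ratio 0 = 0"
  by (simp add: neg_ratio_def fps_mult_nth quad_root_nth_0)

definition head_True_gf :: "int \<Rightarrow> real fps" where
  "head_True_gf k =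
     (if 0 < k then (1 + zero_score_gf) * pos_ratio ^ nat k
      else if k = 0 then zero_score_gf
      else zero_score_gf * neg_ratio ^ nat (- k))"

definition head_False_gf :: "int \<Rightarrow> real fps" where
  "head_False_gf k = fps_X * ((if k = 0 then 1 else 0) + head_True_gf k) * geometric_fps"

lemma head_False_gf_rec:
  "head_False_gf k = fps_X * ((if k = 0 then 1 else 0) + head_False_gf k + head_True_gf k)"
  using geometric_fps_mult_one_minus_X unfolding head_False_gf_def by algebra

lemma head_True_gf_rec:
  "head_True_gf k = fps_X * ((if k = 0 then 1 else 0) + head_False_gf (k - 1) + head_True_gf (k + 1))"
proof -
  consider m where "k = int m + 1" | "k = 0" | m where "k = - int m - 1"
  proof (cases "0 < k")
    case True
    then show ?thesis
      using that(1)[of "nat (k - 1)"] by simp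
  next
    case False
    then show ?thesis
      using that(2) that(3)[of "nat (- k - 1)"] by (cases "k = 0") simp_all
  qed
  then show ?thesis
  proof cases
    case 1
    let ?c = "(1 + zero_score_gf) * pos_ratio ^ m"
    have "head_True_gf k = ?c * pos_ratio" "head_True_gf (k + 1) = ?c * pos_ratio ^ 2"
      using 1 by (simp_all add: head_True_gf_def nat_add_distrib power_add power2_eq_square)
    moreover have "head_False_gf (k - 1) = fps_X * ?c * geometric_fps"
      using 1 by (cases m) (simp_all add: head_False_gf_def head_True_gf_def nat_add_distrib)
    moreover have "?c * pos_ratio = fps_X * (fps_X * ?c * geometric_fps + ?c * pos_ratio ^ 2)"
      using arg_cong[OF pos_ratio_eq, of "\<lambda>r. ?c * r"] by (simp add: algebra_simps power2_eq_square)
    ultimately show ?thesis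
      using 1 by simp
  next
    case 2
    then show ?thesis
      by (simp add: head_False_gf_def head_True_gf_def) (rule zero_score_gf_eq)
  next
    case 3
    let ?c = "zero_score_gf * neg_ratio ^ m"
    have "head_True_gf k = ?c * neg_ratio" "head_True_gf (k + 1) = ?c"
      unfolding 3 by (cases m) (simp_all add: head_True_gf_def nat_add_distrib)
    moreover have "head_False_gf (k - 1) = fps_X * (?c * neg_ratio ^ 2) * geometric_fps"
      unfolding 3 by (simp add: head_False_gf_def head_True_gf_def nat_add_distrib power_add power2_eq_square)
    moreover have "?c * neg_ratio = fps_X * (fps_X * (?c * neg_ratio ^ 2) * geometric_fps + ?c)"
      using arg_cong[OF neg_ratio_eq, of "\<lambda>r. ?c * r"] by (simp add: algebra_simps power2_eq_square)
    ultimately show ?thesis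
      using 3 by simp
  qed
qed

lemma head_score_count_eq_gf:
  "head_score_count True n k = fps_nth (head_True_gf k) n \<and>
   head_score_count False n k = fps_nth (head_False_gf k) n"
proof (induction n arbitrary: k)
  case 0
  show ?case
    by (subst head_True_gf_rec, subst head_False_gf_rec) (simp add: head_score_count_0)
next
  case (Suc n)
  show ?case
    by (subst head_True_gf_rec, subst head_False_gf_rec)
      (simp add: head_score_count_Suc_True head_score_count_Suc_False Suc.IH)
qed

lemma sum_int_symmetric:
  "(\<Sum>k\<in>{-int n..int n}. g k) = g 0 + (\<Sum>k\<in>{1..n}. g (int k) + g (- int k))"
proof (induction n)
  case (Suc n)
  have "{-int (Suc n)..int (Suc n)} = insert (int (Suc n)) (insert (- int (Suc n)) {-int n..int n})"
    by auto
  then show ?case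
    using Suc by (simp add: add_ac)
qed simp

lemma fps_nth_sum_powers:
  fixes f r :: "'a :: field fps"
  assumes "fps_nth r 0 = 0"
  shows "(\<Sum>k\<in>{1..n}. fps_nth (f * r ^ k) n) = fps_nth (f * r * inverse (1 - r)) n"
proof -
  have "(1 - r) * (\<Sum>k\<in>{1..n}. r ^ k) = r - r ^ Suc n"
    using sum_gp_multiplied[of 1 n r] by (cases "n = 0") simp_all
  moreover have "(1 - r) * inverse (1 - r) = 1"
    by (rule inverse_mult_eq_1') (simp add: assms)
  moreover have "f * r * i = f * S + p * (f * i)" if "(1 - r) * S = r - p" "(1 - r) * i = 1" for S p i
    using that by algebra
  ultimately have "f * r * inverse (1 - r) = f * (\<Sum>k\<in>{1..n}. r ^ k) + r ^ Suc n * (f * inverse (1 - r))"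
    by blast
  moreover have "fps_nth (r ^ Suc n * (f * inverse (1 - r))) n = 0"
  proof (cases "r = 0")
    case False
    then have "subdegree r \<noteq> 0"
      using assms by (simp add: subdegree_eq_0_iff)
    then have "Suc n * 1 \<le> Suc n * subdegree r"
      by (intro mult_le_mono2) simp
    then have "n < subdegree (r ^ Suc n)"
      by (simp only: subdegree_power) simp
    then show ?thesis
      by (rule fps_mult_nth_eq0[OF less_le_trans[OF _ le_add1]])
  qed simp
  ultimately show ?thesis
    by (simp add: sum_distrib_left fps_sum_nth)
qed

lemma head_score_count_sum_eq_fps_nth:
  assumes "k \<noteq> 0"
  shows "head_score_count False n k + head_score_count True n k = fps_nth (geometric_fps * head_True_gf k) n"
proof -
  have "fps_X * h * geometric_fps + h = geometric_fps * h" for h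
    using geometric_fps_mult_one_minus_X by algebra
  then have "head_False_gf k + head_True_gf k = geometric_fps * head_True_gf k"
    using assms by (simp add: head_False_gf_def)
  then show ?thesis
    by (simp add: head_score_count_eq_gf flip: fps_add_nth)
qed

definition signed_gf :: "real fps" where
  "signed_gf = geometric_fps * (1 + zero_score_gf) * pos_ratio * inverse (1 - pos_ratio)
             - geometric_fps * zero_score_gf * neg_ratio * inverse (1 - neg_ratio)"

lemma signed_count_eq_fps_nth: "signed_count n = fps_nth signed_gf n"
proof -
  have summand: "of_int (sgn (int k)) * (head_score_count False n (int k) + head_score_count True n (int k))
      + of_int (sgn (- int k)) * (head_score_count False n (- int k) + head_score_count True n (- int k))
      = fps_nth (geometric_fps * (1 + zero_score_gf) * pos_ratio ^ k) n
      - fps_nth (geometric_fps * zero_score_gf * neg_ratio ^ k) n"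
    if "k \<in> {1..n}" for k
    using that by (simp add: head_score_count_sum_eq_fps_nth head_True_gf_def mult.assoc)
  have "signed_count n = (\<Sum>k\<in>{1..n}. fps_nth (geometric_fps * (1 + zero_score_gf) * pos_ratio ^ k) n
                                     - fps_nth (geometric_fps * zero_score_gf * neg_ratio ^ k) n)"
    unfolding signed_count_eq_sum_head_score_count sum_int_symmetric
    by (simp only: sgn_0 of_int_0 mult_zero_left add_0_left) (rule sum.cong[OF refl summand])
  also have "\<dots> = fps_nth signed_gf n"
    using fps_nth_sum_powers[OF pos_ratio_nth_0] fps_nth_sum_powers[OF neg_ratio_nth_0]
    by (simp add: sum_subtractf signed_gf_def)
  finally show ?thesis .
qed

lemma signed_gf_closed_form: "(2 * signed_gf + geometric_fps) * ((1 - fps_X) * sqrt_disc) = 1"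
proof -
  have "inverse (1 - pos_ratio) * (1 - pos_ratio) = 1"
    by (rule inverse_mult_eq_1) (simp add: pos_ratio_nth_0)
  moreover have "inverse (1 - neg_ratio) * (1 - neg_ratio) = 1"
    by (rule inverse_mult_eq_1) (simp add: neg_ratio_nth_0)
  ultimately show ?thesis
    using geometric_fps_mult_one_minus_X sqrt_disc_inverse quad_root_eq
    unfolding signed_gf_def zero_score_gf_def pos_ratio_def neg_ratio_def sqrt_disc_eq_quad_root
    by algebra
qed

definition radicand_poly :: "real poly" where
  "radicand_poly = [:1, -1:] * [:1, -2:] * [:1, 1, 2:]"

lemma poly_radicand_poly: "poly radicand_poly t = (1 - t) * (1 - 2 * t) * (2 * t ^ 2 + t + 1)"
  by (simp add: radicand_poly_def algebra_simps power2_eq_square)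

lemma sqrt_disc_square_eq_radicand_poly: "((1 - fps_X) * sqrt_disc) ^ 2 = fps_of_poly radicand_poly"
proof -
  have "fps_of_poly radicand_poly = (1 - fps_X) * (1 - 2 * fps_X) * (1 + fps_X + 2 * fps_X ^ 2)"
    by (simp add: radicand_poly_def fps_of_poly_mult fps_of_poly_pCons numeral_fps_const algebra_simps power2_eq_square)
  then show ?thesis
    using sqrt_disc_squared geometric_fps_mult_one_minus_X unfolding disc_def by algebra
qed

section \<open>Evaluation inside the disc of radius 1/2\<close>

lemma fps_conv_radius_ge_of_coeff_bound:
  fixes f :: "'a :: {banach, real_normed_div_algebra} fps"
  assumes "0 < b" and bound: "\<And>n. norm (fps_nth f n) \<le> C * b ^ n"
  shows "ereal (1 / b) \<le> fps_conv_radius f"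
  unfolding fps_conv_radius_def
proof (rule conv_radius_geI_ex')
  fix r :: real
  assume r: "0 < r" "ereal r < ereal (1 / b)"
  then have "b * r < 1"
    using \<open>0 < b\<close> by (simp add: field_simps)
  then have "summable (\<lambda>n. C * (b * r) ^ n)"
    using r \<open>0 < b\<close> by (intro summable_mult summable_geometric) simp
  then show "summable (\<lambda>n. fps_nth f n * of_real r ^ n)"
  proof (rule summable_comparison_test')
    fix n
    have "norm (fps_nth f n * of_real r ^ n) = norm (fps_nth f n) * r ^ n"
      using r by (simp add: norm_mult norm_power)
    also have "\<dots> \<le> C * b ^ n * r ^ n"
      using bound[of n] r by (intro mult_right_mono) simp_all
    finally show "norm (fps_nth f n * of_real r ^ n) \<le> C * (b * r) ^ n"
      by (simp add: power_mult_distrib mult.assoc)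
  qed
qed

lemma norm_less_fps_conv_radius:
  fixes f :: "'a :: {banach, real_normed_div_algebra} fps" and x :: 'a
  shows "ereal r \<le> fps_conv_radius f \<Longrightarrow> norm x < r \<Longrightarrow> ereal (norm x) < fps_conv_radius f"
  by (rule less_le_trans[of _ "ereal r"]) auto

lemma eval_fps_pos_of_nonvanishing:
  fixes f :: "real fps"
  assumes radius: "ereal R \<le> fps_conv_radius f" and "0 < fps_nth f 0"
    and nonzero: "\<And>x. \<bar>x\<bar> < R \<Longrightarrow> eval_fps f x \<noteq> 0" and "\<bar>t\<bar> < R"
  shows "0 < eval_fps f t"
proof (rule ccontr)
  assume "\<not> 0 < eval_fps f t"
  then have zero_between: "0 \<in> closed_segment (eval_fps f 0) (eval_fps f t)"
    using \<open>0 < fps_nth f 0\<close> by (simp add: eval_fps_at_0 closed_segment_eq_real_ivl)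
  have segment: "closed_segment 0 t \<subseteq> ball 0 R"
    using \<open>\<bar>t\<bar> < R\<close> by (intro closed_segment_subset) auto
  have "ball (0 :: real) R \<subseteq> eball 0 (fps_conv_radius f)"
  proof
    fix x :: real
    assume "x \<in> ball 0 R"
    then show "x \<in> eball 0 (fps_conv_radius f)"
      using norm_less_fps_conv_radius[OF radius, of x] by simp
  qed
  then have "continuous_on (closed_segment 0 t) (eval_fps f)"
    using segment by (intro continuous_on_subset[OF continuous_on_eval_fps]) simp
  then obtain x where "x \<in> closed_segment 0 t" "eval_fps f x = 0"
    using IVT'_closed_segment_real[of 0 "eval_fps f", OF zero_between] by blast
  then show False
    using segment nonzero by auto
qed

definition recip_sqrt_gf :: "real fps" where
  "recip_sqrt_gf = 2 * signed_gf + geometric_fps"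

lemma fps_nth_recip_sqrt_gf: "fps_nth recip_sqrt_gf n = 2 * signed_count n + 1"
  by (simp add: recip_sqrt_gf_def geometric_fps_def signed_count_eq_fps_nth numeral_fps_const)

lemma fps_conv_radius_signed_gf: "ereal (1 / 2) \<le> fps_conv_radius signed_gf"
  using abs_signed_count_le
  by (intro fps_conv_radius_ge_of_coeff_bound[where C = 1]) (simp_all add: signed_count_eq_fps_nth)

lemma fps_conv_radius_recip_sqrt_gf: "ereal (1 / 2) \<le> fps_conv_radius recip_sqrt_gf"
proof (rule fps_conv_radius_ge_of_coeff_bound[where C = 3])
  show "norm (fps_nth recip_sqrt_gf n) \<le> 3 * 2 ^ n" for n
    using abs_signed_count_le[of n] one_le_power[of "2::real" n]
    unfolding fps_nth_recip_sqrt_gf real_norm_def by arith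
qed simp

lemma eval_recip_sqrt_gf:
  assumes "\<bar>t\<bar> < 1 / 2"
  shows "eval_fps recip_sqrt_gf t = 1 / sqrt (poly radicand_poly t)"
proof -
  have radius: "ereal (norm x) < fps_conv_radius recip_sqrt_gf" if "\<bar>x\<bar> < 1 / 2" for x :: real
    using norm_less_fps_conv_radius[OF fps_conv_radius_recip_sqrt_gf] that by simp
  have identity: "recip_sqrt_gf ^ 2 * fps_of_poly radicand_poly = 1"
    using signed_gf_closed_form unfolding recip_sqrt_gf_def sqrt_disc_square_eq_radicand_poly[symmetric]
    by (simp add: power_mult_distrib[symmetric])
  have square: "eval_fps recip_sqrt_gf x ^ 2 * poly radicand_poly x = 1" if "\<bar>x\<bar> < 1 / 2" for x
  proof -
    have "eval_fps recip_sqrt_gf x ^ 2 * poly radicand_poly x = eval_fps (recip_sqrt_gf ^ 2 * fps_of_poly radicand_poly) x"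
      using radius[OF that] by (simp add: eval_fps_mult eval_fps_power less_le_trans[OF _ fps_conv_radius_power])
    then show ?thesis
      by (simp add: identity)
  qed
  have positive: "0 < eval_fps recip_sqrt_gf t"
  proof (rule eval_fps_pos_of_nonvanishing[OF fps_conv_radius_recip_sqrt_gf])
    show "0 < fps_nth recip_sqrt_gf 0"
      by (simp add: fps_nth_recip_sqrt_gf signed_count_0)
    show "eval_fps recip_sqrt_gf x \<noteq> 0" if "\<bar>x\<bar> < 1 / 2" for x
      using square[OF that] by auto
  qed (rule assms)
  then have "poly radicand_poly t = (1 / eval_fps recip_sqrt_gf t) ^ 2"
    using square[OF assms] by (simp add: field_simps)
  then show ?thesis
    using positive by simp
qed

theorem mainTheorem1:
  shows "\<exists>r>0. \<forall>t::real. \<bar>t\<bar> < r \<longrightarrow>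
    (\<lambda>n. Delta n * (2 * t) ^ n) sums
      (1/2 * (1 / sqrt ((1 - t) * (1 - 2 * t) * (2 * t^2 + t + 1))) - 1/2 * (1 / (1 - t)))"
proof (intro exI[of _ "1/2"] conjI allI impI)
  fix t :: real
  assume t: "\<bar>t\<bar> < 1 / 2"
  then have radius: "ereal (norm t) < fps_conv_radius f" if "ereal (1 / 2) \<le> fps_conv_radius f" for f :: "real fps"
    using norm_less_fps_conv_radius[OF that] by simp
  have coeffs: "Delta n * (2 * t) ^ n = signed_count n * t ^ n" for n
    by (simp add: Delta_eq_signed_count[symmetric] power_mult_distrib)
  have signed_sums: "(\<lambda>n. signed_count n * t ^ n) sums eval_fps signed_gf t"
    using sums_eval_fps[OF radius[OF fps_conv_radius_signed_gf]] by (simp add: signed_count_eq_fps_nth)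
  then have "(\<lambda>n. (2 * signed_count n + 1) * t ^ n) sums (2 * eval_fps signed_gf t + 1 / (1 - t))"
    using sums_add[OF sums_mult[OF signed_sums, of 2] geometric_sums[of t]] t by (simp add: algebra_simps)
  then have "2 * eval_fps signed_gf t + 1 / (1 - t) = 1 / sqrt (poly radicand_poly t)"
    using sums_eval_fps[OF radius[OF fps_conv_radius_recip_sqrt_gf]] eval_recip_sqrt_gf[OF t]
    by (simp add: fps_nth_recip_sqrt_gf sums_unique2)
  then have "eval_fps signed_gf t = 1/2 * (1 / sqrt (poly radicand_poly t)) - 1/2 * (1 / (1 - t))"
    by linarith
  then show "(\<lambda>n. Delta n * (2 * t) ^ n) sums
      (1/2 * (1 / sqrt ((1 - t) * (1 - 2 * t) * (2 * t^2 + t + 1))) - 1/2 * (1 / (1 - t)))"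
    using signed_sums unfolding coeffs poly_radicand_poly by simp
qed simp

end
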